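(* Consider $N$ user devices indexed by $n\in\{1,\dots,N\}$ with positive weights $\rho_1,\dots,\rho_N>0$. For each $n$, let the dual confidence thresholds satisfy $0<\alpha_n^l<\alpha_n^u<1$, and let $\bar{\mathcal{U}}_n(\alpha_n^l,\alpha_n^u)>0$ be the limiting true positive rate of the dual-threshold early-exit classifier at device $n$ (defined in the context). Then the objective function $$F(\alpha^l,\alpha^u)=\sum_{n=1}^{N}\rho_n \ln\big(\bar{\mathcal{U}}_n(\alpha_n^l,\alpha_n^u)\big)$$ is monotonically decreasing with respect to the dual threshold variables $\alpha^l=(\alpha_1^l,\dots,\alpha_N^l)$ and $\alpha^u=(\alpha_1^u,\dots,\alpha_N^u)$, i.e. increasing any single threshold $\alpha_n^l$ or $\alpha_n^u$ (while keeping $\alpha_n^l<\alpha_n^u$ within $(0,1)$ and all other thresholds fixed) does not increase $F$.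
   Context: Setting. Device $n$ observes a sequence $\Phi_n$ of events $I_k$. Each event $I_k$ has a ground-truth label $y^{(k)}\in\{0,1\}$ ($1$ = critical, $0$ = normal) and, from a fixed $L$-layer classifier (independent of the thresholds), a sequence of confidence scores $C_1^{(k)},\dots,C_L^{(k)}\in[0,1]$. Given thresholds $(\alpha_n^l,\alpha_n^u)$, the predicted label $\hat y^{(k)}$ is: $\hat y^{(k)}=0$ if there is $q\le L$ with $C_q^{(k)}\le\alpha_n^l$ and $\alpha_n^l<C_t^{(k)}<\alpha_n^u$ for all $t<q$; $\hat y^{(k)}=1$ if there is $q\le L$ with $C_q^{(k)}\ge\alpha_n^u$ and $\alpha_n^l<C_t^{(k)}<\alpha_n^u$ for all $t<q$; and $\hat y^{(k)}=0$ if $\alpha_n^l<C_t^{(k)}<\alpha_n^u$ for all $t\le L$ (i.e. the first layer whose score leaves the open interval $(\alpha_n^l,\alpha_n^u)$ decides the label, and if none does the event is labeled normal). Let $\Phi_n^{P}=\{I_k\in\Phi_n: y^{(k)}=1\}$ (assumed nonempty) and $\hat\Phi_n^{TP}=\{I_k\in\Phi_n: y^{(k)}=1,\ \hat y^{(k)}=1\}$. The empirical utility (true positive rate) is $\mathcal{U}_n(\alpha_n^l,\alpha_n^u)=|\hat\Phi_n^{TP}|/|\Phi_n^{P}|$, and $\bar{\mathcal{U}}_n(\alpha_n^l,\alpha_n^u)=\lim_{|\Phi_n|\to\infty}\mathcal{U}_n(\alpha_n^l,\alpha_n^u)$ (assumed to exist). Standing assumption: $\bar{\mathcal{U}}_n>0$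 for all $n$, so the logarithm is defined. "Monotonically decreasing" is in the non-strict sense (non-increasing). *)

theory Defs
  imports Complex_Main
begin

text \<open>Predicted label of an event with confidence scores C 1, ..., C L under the
dual thresholds (al, au): the first layer whose score leaves the open interval
(al, au) decides; if none does, the label is 0 (normal).\<close>
definition pred_label :: "nat \<Rightarrow> real \<Rightarrow> real \<Rightarrow> (nat \<Rightarrow> real) \<Rightarrow> nat" where
  "pred_label L al au C =
     (if \<exists>q\<in>{1..L}. au \<le> C q \<and> (\<forall>t\<in>{1..<q}. al < C t \<and> C t < au) then 1 else 0)"

definition emp_util ::
  "nat \<Rightarrow> (nat \<Rightarrow> nat) \<Rightarrow> (nat \<Rightarrow> nat \<Rightarrow> real) \<Rightarrow> real \<Rightarrow> real \<Rightarrow> nat \<Rightarrow> real" where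
  "emp_util L y C al au m =
     real (card {k. k < m \<and> y k = 1 \<and> pred_label L al au (C k) = 1})
     / real (card {k. k < m \<and> y k = 1})"

definition lim_util ::
  "nat \<Rightarrow> (nat \<Rightarrow> nat) \<Rightarrow> (nat \<Rightarrow> nat \<Rightarrow> real) \<Rightarrow> real \<Rightarrow> real \<Rightarrow> real" where
  "lim_util L y C al au = lim (\<lambda>m. emp_util L y C al au m)"

definition objF ::
  "nat \<Rightarrow> nat \<Rightarrow> (nat \<Rightarrow> real) \<Rightarrow> (nat \<Rightarrow> nat \<Rightarrow> nat) \<Rightarrow> (nat \<Rightarrow> nat \<Rightarrow> nat \<Rightarrow> real)
     \<Rightarrow> (nat \<Rightarrow> real) \<Rightarrow> (nat \<Rightarrow> real) \<Rightarrow> real" where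
  "objF N L \<rho> y C al au = (\<Sum>n=1..N. \<rho> n * ln (lim_util L (y n) (C n) (al n) (au n)))"

end

theory Submission
  imports Defs
begin

text \<open>Raising the thresholds can only delay or prevent a positive decision: if under
(al', au') the event exits upward at layer q, then under lower thresholds (al, au) the
first layer t \<le> q whose score reaches au exits upward, since every earlier score lies
above al' \<ge> al and below au. Hence every per-device true positive rate, its limit, its
logarithm and the nonnegatively weighted sum F are antitone in both thresholds.\<close>

lemma pred_label_antimono:
  assumes "pred_label L al' au' c = 1" "al \<le> al'" "au \<le> au'"
  shows "pred_label L al au c = 1"
proof -
  obtain q where q: "q \<in> {1..L}" "au' \<le> c q" "\<forall>t\<in>{1..<q}. al' < c t \<and> c t < au'"
    using assms(1) unfolding pred_label_def by (metis zero_neq_one)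
  have "1 \<le> q \<and> au \<le> c q"
    using q assms(3) by auto
  then obtain t where t: "t \<le> q" "1 \<le> t \<and> au \<le> c t"
    and before: "\<forall>s<t. \<not> (1 \<le> s \<and> au \<le> c s)"
    using ex_least_nat_le[of "\<lambda>t. 1 \<le> t \<and> au \<le> c t"] by auto
  have "\<forall>s\<in>{1..<t}. al < c s \<and> c s < au"
  proof
    fix s assume s: "s \<in> {1..<t}"
    then have "al' < c s"
      using q(3) t(1) by auto
    moreover have "\<not> au \<le> c s"
      using before s by auto
    ultimately show "al < c s \<and> c s < au"
      using assms(2) by auto
  qed
  moreover have "t \<in> {1..L}"
    using t q(1) by auto
  ultimately show ?thesis
    using t(2) unfolding pred_label_def by auto
qed

lemma emp_util_antimono:
  assumes "al \<le> al'" "au \<le> au'"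
  shows "emp_util L y C al' au' m \<le> emp_util L y C al au m"
  unfolding emp_util_def
proof (rule divide_right_mono)
  show "real (card {k. k < m \<and> y k = 1 \<and> pred_label L al' au' (C k) = 1})
    \<le> real (card {k. k < m \<and> y k = 1 \<and> pred_label L al au (C k) = 1})"
    using pred_label_antimono[OF _ assms] by (intro of_nat_mono card_mono) auto
qed simp

lemma lim_util_antimono:
  assumes "al \<le> al'" "au \<le> au'"
    and "convergent (\<lambda>m. emp_util L y C al au m)"
    and "convergent (\<lambda>m. emp_util L y C al' au' m)"
  shows "lim_util L y C al' au' \<le> lim_util L y C al au"
  using assms(3,4) emp_util_antimono[OF assms(1,2)] unfolding lim_util_def
  by (intro LIMSEQ_le[of "\<lambda>m. emp_util L y C al' au' m" _ "\<lambda>m. emp_util L y C al au m"])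
     (auto simp: convergent_LIMSEQ_iff)

lemma objF_antimono:
  assumes rho_nonneg: "\<And>n. n \<in> {1..N} \<Longrightarrow> 0 \<le> \<rho> n"
    and conv: "\<And>n. n \<in> {1..N} \<Longrightarrow> convergent (\<lambda>m. emp_util L (y n) (C n) (al n) (au n) m)"
    and conv': "\<And>n. n \<in> {1..N} \<Longrightarrow> convergent (\<lambda>m. emp_util L (y n) (C n) (al' n) (au' n) m)"
    and pos': "\<And>n. n \<in> {1..N} \<Longrightarrow> 0 < lim_util L (y n) (C n) (al' n) (au' n)"
    and le: "\<And>n. n \<in> {1..N} \<Longrightarrow> al n \<le> al' n \<and> au n \<le> au' n"
  shows "objF N L \<rho> y C al' au' \<le> objF N L \<rho> y C al au"
  unfolding objF_def
proof (rule sum_mono)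
  fix n assume n: "n \<in> {1..N}"
  have "lim_util L (y n) (C n) (al' n) (au' n) \<le> lim_util L (y n) (C n) (al n) (au n)"
    using le[OF n] conv[OF n] conv'[OF n] by (intro lim_util_antimono) auto
  then have "ln (lim_util L (y n) (C n) (al' n) (au' n)) \<le> ln (lim_util L (y n) (C n) (al n) (au n))"
    using pos'[OF n] by simp
  then show "\<rho> n * ln (lim_util L (y n) (C n) (al' n) (au' n))
      \<le> \<rho> n * ln (lim_util L (y n) (C n) (al n) (au n))"
    using rho_nonneg[OF n] by (rule mult_left_mono)
qed

theorem theorem1:
  fixes N L :: nat and \<rho> :: "nat \<Rightarrow> real"
    and y :: "nat \<Rightarrow> nat \<Rightarrow> nat" and C :: "nat \<Rightarrow> nat \<Rightarrow> nat \<Rightarrow> real"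
  assumes rho_pos: "\<And>n. n \<in> {1..N} \<Longrightarrow> \<rho> n > 0"
    and labels: "\<And>n k. n \<in> {1..N} \<Longrightarrow> y n k \<in> {0, 1}"
    and scores: "\<And>n k t. n \<in> {1..N} \<Longrightarrow> t \<in> {1..L} \<Longrightarrow> C n k t \<in> {0..1}"
    and positives: "\<And>n. n \<in> {1..N} \<Longrightarrow> \<exists>k. y n k = 1"
    and lim_exists: "\<And>n al au. n \<in> {1..N} \<Longrightarrow> 0 < al \<Longrightarrow> al < au \<Longrightarrow> au < 1 \<Longrightarrow>
                       convergent (\<lambda>m. emp_util L (y n) (C n) al au m)"
    and lim_pos: "\<And>n al au. n \<in> {1..N} \<Longrightarrow> 0 < al \<Longrightarrow> al < au \<Longrightarrow> au < 1 \<Longrightarrow>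
                       lim_util L (y n) (C n) al au > 0"
    and valid: "\<And>n. n \<in> {1..N} \<Longrightarrow> 0 < al n \<and> al n < au n \<and> au n < 1"
    and j: "j \<in> {1..N}"
  shows "(\<forall>a. al j \<le> a \<and> a < au j \<longrightarrow>
            objF N L \<rho> y C (al(j := a)) au \<le> objF N L \<rho> y C al au)
       \<and> (\<forall>b. au j \<le> b \<and> b < 1 \<longrightarrow>
            objF N L \<rho> y C al (au(j := b)) \<le> objF N L \<rho> y C al au)"
proof -
  have raise: "objF N L \<rho> y C al' au' \<le> objF N L \<rho> y C al au"
    if valid': "\<And>n. n \<in> {1..N} \<Longrightarrow> 0 < al' n \<and> al' n < au' n \<and> au' n < 1"
      and le: "\<And>n. al n \<le> al' n \<and> au n \<le> au' n" for al' au'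
    using rho_pos lim_exists valid valid' lim_pos le
    by (intro objF_antimono) (auto simp: less_imp_le)
  show ?thesis
  proof (intro conjI allI impI)
    fix a assume "al j \<le> a \<and> a < au j"
    then show "objF N L \<rho> y C (al(j := a)) au \<le> objF N L \<rho> y C al au"
      using valid j by (intro raise) fastforce+
  next
    fix b assume "au j \<le> b \<and> b < 1"
    then show "objF N L \<rho> y C al (au(j := b)) \<le> objF N L \<rho> y C al au"
      using valid j by (intro raise) fastforce+
  qed
qed

end
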